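(* Let $p$ be a prime, let $\Gamma$ be a finite connected $p$-valent arc-transitive graph, and let $G\le \mathrm{Aut}(\Gamma)$ be a solvable group acting transitively on the arcs of $\Gamma$. Then $G$, as a permutation group on the vertex set of $\Gamma$, has the EKR property.
   Context: For a permutation group $G$ on a finite set $V$, a subset $\mathcal{F}\subseteq G$ is intersecting if for all $g,h\in\mathcal{F}$ there is $v\in V$ with $g(v)=h(v)$. $G$ has the Erdős–Ko–Rado (EKR) property if the maximum size of an intersecting set of $G$ equals the maximum order of a point stabilizer $G_v$, $v\in V$. *)

theory Defs
  imports "HOL-Computational_Algebra.Primes" "HOL-Algebra.Solvable_Groups" "HOL-Combinatorics.Permutations"
begin

definition simple_graph :: "'a set \<Rightarrow> ('a \<Rightarrow> 'a \<Rightarrow> bool) \<Rightarrow> bool" where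
  "simple_graph V E \<longleftrightarrow> finite V \<and> (\<forall>u v. E u v \<longrightarrow> u \<in> V \<and> v \<in> V)
     \<and> (\<forall>u v. E u v \<longrightarrow> E v u) \<and> (\<forall>v. \<not> E v v)"

definition connected_graph :: "'a set \<Rightarrow> ('a \<Rightarrow> 'a \<Rightarrow> bool) \<Rightarrow> bool" where
  "connected_graph V E \<longleftrightarrow> V \<noteq> {} \<and> (\<forall>u\<in>V. \<forall>v\<in>V. E\<^sup>*\<^sup>* u v)"

definition regular_graph :: "'a set \<Rightarrow> ('a \<Rightarrow> 'a \<Rightarrow> bool) \<Rightarrow> nat \<Rightarrow> bool" where
  "regular_graph V E k \<longleftrightarrow> (\<forall>v\<in>V. card {w. E v w} = k)"

definition graph_aut :: "'a set \<Rightarrow> ('a \<Rightarrow> 'a \<Rightarrow> bool) \<Rightarrow> ('a \<Rightarrow> 'a) \<Rightarrow> bool" where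
  "graph_aut V E f \<longleftrightarrow> f permutes V \<and> (\<forall>u v. E u v \<longleftrightarrow> E (f u) (f v))"

definition perm_monoid :: "('a \<Rightarrow> 'a) set \<Rightarrow> ('a \<Rightarrow> 'a) monoid" where
  "perm_monoid G = \<lparr>carrier = G, monoid.mult = (\<circ>), one = id\<rparr>"

definition arcs :: "('a \<Rightarrow> 'a \<Rightarrow> bool) \<Rightarrow> ('a \<times> 'a) set" where
  "arcs E = {(u, v). E u v}"

definition arc_transitive_on :: "('a \<Rightarrow> 'a \<Rightarrow> bool) \<Rightarrow> ('a \<Rightarrow> 'a) set \<Rightarrow> bool" where
  "arc_transitive_on E G \<longleftrightarrow>
     (\<forall>a\<in>arcs E. \<forall>b\<in>arcs E. \<exists>g\<in>G. (g (fst a), g (snd a)) = b)"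

definition intersecting :: "'a set \<Rightarrow> ('a \<Rightarrow> 'a) set \<Rightarrow> bool" where
  "intersecting V F \<longleftrightarrow> (\<forall>g\<in>F. \<forall>h\<in>F. \<exists>v\<in>V. g v = h v)"

definition stabilizer :: "('a \<Rightarrow> 'a) set \<Rightarrow> 'a \<Rightarrow> ('a \<Rightarrow> 'a) set" where
  "stabilizer G v = {g \<in> G. g v = v}"

definition EKR :: "'a set \<Rightarrow> ('a \<Rightarrow> 'a) set \<Rightarrow> bool" where
  "EKR V G \<longleftrightarrow>
     Max {card F | F. F \<subseteq> G \<and> intersecting V F} = Max {card (stabilizer G v) | v. v \<in> V}"

end

theory Submission
  imports Defs
begin

text \<open>By the clique-coclique bound, a permutation group \<open>G\<close> on \<open>V\<close> has the EKR property as soon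
  as it contains a sharply transitive subset \<open>C\<close>: then \<open>|G| = |C| |G\<^sub>v|\<close>, and for every intersecting
  family \<open>F\<close> the map \<open>(f, c) \<mapsto> c\<inverse> f\<close> embeds \<open>F \<times> C\<close> into \<open>G\<close>.

  Such a \<open>C\<close> is found by induction on \<open>|V|\<close>.  Solvability gives a normal subgroup \<open>N\<close> acting
  nontrivially and commutatively on \<open>V\<close>.  If \<open>N\<close> is transitive it acts regularly, and one
  element of \<open>N\<close> for each image of a fixed point is such a subset.  If no vertex has two neighbours in one \<open>N\<close>-orbit, the normal quotient is again a
  connected \<open>p\<close>-valent graph on which \<open>G\<close> acts arc-transitively, and a sharply transitive subset
  for it lifts along the semiregular group \<open>N\<close>.  Otherwise the prime valency makes the graph
  bipartite with the two \<open>N\<close>-orbits as halves.  Then \<open>C\<close> is built from the pointwise stabiliser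
  \<open>K\<close> of one half if \<open>K\<close> is trivial or transitive on the other half; in the remaining case the
  product of the two half stabilisers is a normal subgroup to which the quotient step applies.\<close>

lemma (in group) derived_series_normal: "(derived G ^^ n) (carrier G) \<lhd> G"
  by (induction n) (simp_all add: normal_self derived_is_normal)

lemma (in group) solvable_normal_subgroup_commutators_in:
  assumes "solvable G" and "\<one> \<in> S" and "\<not> carrier G \<subseteq> S"
  obtains N where "N \<lhd> G" and "\<not> N \<subseteq> S"
    and "\<And>a b. a \<in> N \<Longrightarrow> b \<in> N \<Longrightarrow> a \<otimes> b \<otimes> inv a \<otimes> inv b \<in> S"
proof -
  define D where "D n = (derived G ^^ n) (carrier G)" for n
  obtain n where "D n = {\<one>}"
    using solvable_iff_trivial_derived_seq assms(1) unfolding D_def by blast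
  then have ex: "\<exists>n. D n \<subseteq> S" using assms(2) by (intro exI[of _ n]) simp
  define m where "m = (LEAST m. D m \<subseteq> S)"
  have Dm: "D m \<subseteq> S" unfolding m_def using LeastI_ex[OF ex] .
  have "m \<noteq> 0" using Dm assms(3) unfolding D_def by auto
  then obtain k where k: "m = Suc k" using not0_implies_Suc by blast
  have "\<not> D k \<subseteq> S"
    using Least_le[of "\<lambda>m. D m \<subseteq> S" k] k unfolding m_def by auto
  moreover have "a \<otimes> b \<otimes> inv a \<otimes> inv b \<in> S" if "a \<in> D k" "b \<in> D k" for a b
  proof -
    have "a \<otimes> b \<otimes> inv a \<otimes> inv b \<in> derived G (D k)"
      unfolding derived_def using that by (auto intro: generate.incl)
    then show ?thesis using Dm k unfolding D_def by auto
  qed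
  ultimately show thesis using that derived_series_normal unfolding D_def by blast
qed

definition derangement_clique :: "'v set \<Rightarrow> ('g \<Rightarrow> 'v \<Rightarrow> 'v) \<Rightarrow> 'g set \<Rightarrow> bool"
  where "derangement_clique V act C \<longleftrightarrow> (\<forall>c\<in>C. \<forall>d\<in>C. c \<noteq> d \<longrightarrow> (\<forall>v\<in>V. act c v \<noteq> act d v))"

text \<open>For finite \<open>V\<close> a derangement clique of size \<open>card V\<close> is the same as a sharply transitive
  subset: for each \<open>u\<close> the map \<open>c \<mapsto> act c u\<close> is then a bijection onto \<open>V\<close>.\<close>
definition sharply_transitive_subset ::
    "('g, 'b) monoid_scheme \<Rightarrow> 'v set \<Rightarrow> ('g \<Rightarrow> 'v \<Rightarrow> 'v) \<Rightarrow> 'g set \<Rightarrow> bool"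
  where "sharply_transitive_subset G V act C \<longleftrightarrow>
    C \<subseteq> carrier G \<and> card C = card V \<and> derangement_clique V act C"

text \<open>The action need not be faithful: the induction passes to normal quotients, on which \<open>G\<close>
  acts with a kernel.\<close>
locale arc_transitive_action = group G for G (structure) +
  fixes p :: nat and V :: "'v set" and E :: "'v \<Rightarrow> 'v \<Rightarrow> bool" and act :: "'g \<Rightarrow> 'v \<Rightarrow> 'v"
  assumes prime_valency: "prime p"
    and finite_V: "finite V" and V_nonempty: "V \<noteq> {}"
    and edge_fst: "E u v \<Longrightarrow> u \<in> V" and edge_snd: "E u v \<Longrightarrow> v \<in> V"
    and edge_sym: "E u v \<Longrightarrow> E v u"
    and edge_irrefl: "\<not> E v v"
    and connected: "u \<in> V \<Longrightarrow> v \<in> V \<Longrightarrow> E\<^sup>*\<^sup>* u v"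
    and regular: "v \<in> V \<Longrightarrow> card {w. E v w} = p"
    and act_closed: "g \<in> carrier G \<Longrightarrow> v \<in> V \<Longrightarrow> act g v \<in> V"
    and act_mult: "g \<in> carrier G \<Longrightarrow> h \<in> carrier G \<Longrightarrow> v \<in> V \<Longrightarrow> act (g \<otimes> h) v = act g (act h v)"
    and act_one: "v \<in> V \<Longrightarrow> act \<one> v = v"
    and act_edge: "g \<in> carrier G \<Longrightarrow> E u v \<Longrightarrow> E (act g u) (act g v)"
    and arc_transitive: "E u v \<Longrightarrow> E u' v' \<Longrightarrow> \<exists>g\<in>carrier G. act g u = u' \<and> act g v = v'"
begin

lemma act_inv_left: "g \<in> carrier G \<Longrightarrow> v \<in> V \<Longrightarrow> act (inv g) (act g v) = v"
  using act_mult[of "inv g" g v] act_one by simp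

lemma act_inv_right: "g \<in> carrier G \<Longrightarrow> v \<in> V \<Longrightarrow> act g (act (inv g) v) = v"
  using act_mult[of g "inv g" v] act_one by simp

lemma act_inj: "g \<in> carrier G \<Longrightarrow> u \<in> V \<Longrightarrow> v \<in> V \<Longrightarrow> act g u = act g v \<Longrightarrow> u = v"
  by (metis act_inv_left)

lemma act_inv_cong:
  assumes a: "a \<in> carrier G" and b: "b \<in> carrier G" and eq: "\<forall>x\<in>V. act a x = act b x" and x: "x \<in> V"
  shows "act (inv a) x = act (inv b) x"
proof -
  have "act (inv a) x = act (inv a) (act b (act (inv b) x))" using act_inv_right[OF b x] by simp
  also have "\<dots> = act (inv b) x"
    using eq act_inv_left[OF a] act_closed[OF inv_closed[OF b] x] by simp
  finally show ?thesis .
qed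

lemma act_conj:
  assumes g: "g \<in> carrier G" and k: "k \<in> carrier G" and z: "z \<in> V"
  shows "act (g \<otimes> k \<otimes> inv g) z = act g (act k (act (inv g) z))"
  using act_mult[OF m_closed[OF g k] inv_closed[OF g] z]
    act_mult[OF g k act_closed[OF inv_closed[OF g] z]]
  by simp

lemma finite_neighbours: "finite {w. E v w}"
  by (rule finite_subset[OF _ finite_V]) (use edge_snd in blast)

lemma has_neighbour: assumes "v \<in> V" shows "\<exists>w. E v w"
proof (rule ccontr)
  assume "\<nexists>w. E v w"
  then have "p = 0" using regular[OF assms] by simp
  then show False using prime_valency by simp
qed

lemma vertex_transitive: assumes "u \<in> V" "v \<in> V" shows "\<exists>g\<in>carrier G. act g u = v"
proof -
  obtain u' v' where "E u u'" "E v v'" using has_neighbour assms by blast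
  then show ?thesis using arc_transitive by blast
qed

lemma action_nontrivial: "\<exists>g\<in>carrier G. \<exists>v\<in>V. act g v \<noteq> v"
proof -
  obtain v w where "E v w" using V_nonempty has_neighbour by blast
  moreover obtain g where "g \<in> carrier G" "act g v = w"
    using arc_transitive[OF \<open>E v w\<close> edge_sym[OF \<open>E v w\<close>]] by blast
  moreover have "w \<noteq> v" using \<open>E v w\<close> edge_irrefl by blast
  ultimately show ?thesis using edge_fst[OF \<open>E v w\<close>] by blast
qed

lemma act_commute_if_commutator_fixes:
  assumes a: "a \<in> carrier G" and b: "b \<in> carrier G" and v: "v \<in> V"
    and commutator_fixes: "\<forall>x\<in>V. act (a \<otimes> b \<otimes> inv a \<otimes> inv b) x = x"
  shows "act a (act b v) = act b (act a v)"
proof -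
  define w where "w = act b (act a v)"
  have w: "w \<in> V" unfolding w_def using act_closed a b v by blast
  have "w = act a (act b (act (inv a) (act (inv b) w)))"
    using commutator_fixes w act_mult a b act_closed by simp
  also have "\<dots> = act a (act b v)" unfolding w_def using act_inv_left a b v act_closed by simp
  finally show ?thesis unfolding w_def by simp
qed

end

section \<open>Orbits of a normal subgroup\<close>

locale normal_subgroup_action = arc_transitive_action G p V E act
  for G :: "('g, 'b) monoid_scheme" (structure) and p V E and act :: "'g \<Rightarrow> 'v \<Rightarrow> 'v" +
  fixes N :: "'g set" assumes N_normal: "N \<lhd> G"
begin

definition orbit where "orbit x = (\<lambda>n. act n x) ` N"

definition acts_commutatively where
  "acts_commutatively \<longleftrightarrow> (\<forall>a\<in>N. \<forall>b\<in>N. \<forall>v\<in>V. act a (act b v) = act b (act a v))"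

sublocale N: normal N G by (rule N_normal)

lemma orbit_memI: "n \<in> N \<Longrightarrow> act n x \<in> orbit x"
  unfolding orbit_def by blast

lemma orbit_memE:
  assumes "y \<in> orbit x" obtains n where "n \<in> N" "y = act n x"
  using assms unfolding orbit_def by blast

lemma orbit_subset: "x \<in> V \<Longrightarrow> orbit x \<subseteq> V"
  unfolding orbit_def using act_closed N.subset by blast

lemma finite_orbit: "x \<in> V \<Longrightarrow> finite (orbit x)"
  using orbit_subset finite_V finite_subset by blast

lemma orbit_self: "x \<in> V \<Longrightarrow> x \<in> orbit x"
  using orbit_memI[OF N.one_closed, of x] act_one[of x] by simp

lemma orbit_trans:
  assumes x: "x \<in> V" and "y \<in> orbit x" and "z \<in> orbit y" shows "z \<in> orbit x"
proof -
  obtain n m where "n \<in> N" "y = act n x" "m \<in> N" "z = act m y"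
    using assms orbit_memE by metis
  then have "z = act (m \<otimes> n) x" using act_mult[OF N.mem_carrier N.mem_carrier x] by simp
  then show ?thesis using orbit_memI[OF N.m_closed[OF \<open>m \<in> N\<close> \<open>n \<in> N\<close>]] by simp
qed

lemma orbit_sym:
  assumes x: "x \<in> V" and "y \<in> orbit x" shows "x \<in> orbit y"
proof -
  obtain n where "n \<in> N" "y = act n x" using assms orbit_memE by metis
  then have "x = act (inv n) y" using act_inv_left[OF N.mem_carrier x] by simp
  then show ?thesis using orbit_memI[OF N.m_inv_closed[OF \<open>n \<in> N\<close>]] by simp
qed

lemma orbit_eq: assumes x: "x \<in> V" and y: "y \<in> orbit x" shows "orbit y = orbit x"
proof -
  have "y \<in> V" using orbit_subset[OF x] y by blast
  then show ?thesis using orbit_trans[OF x y] orbit_trans[OF _ orbit_sym[OF x y]] by blast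
qed

lemma orbit_eq_if_meet:
  "x \<in> V \<Longrightarrow> y \<in> V \<Longrightarrow> z \<in> orbit x \<Longrightarrow> z \<in> orbit y \<Longrightarrow> orbit x = orbit y"
  using orbit_eq[of x z] orbit_eq[of y z] by simp

lemma act_orbit:
  assumes g: "g \<in> carrier G" and x: "x \<in> V" and y: "y \<in> orbit x"
  shows "act g y \<in> orbit (act g x)"
proof -
  obtain n where n: "n \<in> N" "y = act n x" using y orbit_memE by metis
  have "act (g \<otimes> n \<otimes> inv g) (act g x) = act g y"
    using act_conj[OF g N.mem_carrier[OF n(1)] act_closed[OF g x]] act_inv_left[OF g x] n(2) by simp
  then show ?thesis using orbit_memI[OF N.inv_op_closed2[OF g n(1)]] by metis
qed

lemma card_orbit_le:
  assumes x: "x \<in> V" and y: "y \<in> V" shows "card (orbit x) \<le> card (orbit y)"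
proof -
  obtain g where g: "g \<in> carrier G" "act g x = y" using vertex_transitive[OF x y] by blast
  show ?thesis
  proof (rule card_inj_on_le)
    show "inj_on (act g) (orbit x)"
      using act_inj[OF g(1)] orbit_subset[OF x] by (auto intro: inj_onI)
    show "act g ` orbit x \<subseteq> orbit y" using act_orbit[OF g(1) x] g(2) by blast
  qed (rule finite_orbit[OF y])
qed

lemma card_orbit_eq: "x \<in> V \<Longrightarrow> y \<in> V \<Longrightarrow> card (orbit x) = card (orbit y)"
  using card_orbit_le le_antisym by blast

lemma act_eq_on_orbit:
  assumes comm: "acts_commutatively" and a: "a \<in> N" and b: "b \<in> N" and z: "z \<in> V"
    and eq: "act a z = act b z" and y: "y \<in> orbit z"
  shows "act a y = act b y"
proof -
  obtain m where m: "m \<in> N" "y = act m z" using y orbit_memE by metis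
  have "act a y = act m (act a z)" using comm a m z unfolding acts_commutatively_def by simp
  also have "\<dots> = act b y" using comm b m z eq unfolding acts_commutatively_def by simp
  finally show ?thesis .
qed

lemma act_orbit_N: "n \<in> N \<Longrightarrow> z \<in> V \<Longrightarrow> x \<in> orbit z \<Longrightarrow> act n x \<in> orbit z"
  using orbit_trans orbit_memI by blast

lemma fixes_orbit:
  assumes comm: "acts_commutatively" and n: "n \<in> N" and z: "z \<in> V" and fixed: "act n z = z"
    and y: "y \<in> orbit z"
  shows "act n y = y"
proof -
  have "act n y = act \<one> y"
    by (rule act_eq_on_orbit[OF comm n N.one_closed z _ y]) (simp add: fixed act_one[OF z])
  then show ?thesis using act_one orbit_subset[OF z] y by auto
qed

definition transporter where "transporter x y = (SOME n. n \<in> N \<and> act n x = y)"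

lemma
  assumes "y \<in> orbit x"
  shows transporter_mem: "transporter x y \<in> N" and act_transporter: "act (transporter x y) x = y"
proof -
  have "\<exists>n. n \<in> N \<and> act n x = y" using assms orbit_memE by metis
  then show "transporter x y \<in> N" "act (transporter x y) x = y"
    unfolding transporter_def by (metis (mono_tags, lifting) someI_ex)+
qed

lemma inj_on_transporter: "inj_on (transporter x) (orbit x)"
  using act_transporter by (intro inj_onI) metis

lemma transporter_separates:
  assumes x: "x \<in> V" and semireg: "\<forall>n\<in>N. \<forall>v\<in>V. act n v = v \<longrightarrow> act n x = x"
    and y: "y \<in> orbit x" and y': "y' \<in> orbit x" and "y \<noteq> y'" and v: "v \<in> V"
  shows "act (transporter x y) v \<noteq> act (transporter x y') v"
proof
  define a b where "a = transporter x y" and "b = transporter x y'"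
  have a: "a \<in> N" "act a x = y" and b: "b \<in> N" "act b x = y'"
    using transporter_mem act_transporter y y' a_def b_def by auto
  have ac: "a \<in> carrier G" and bc: "b \<in> carrier G" using a b N.subset by auto
  assume "act (transporter x y) v = act (transporter x y') v"
  then have "act (inv b \<otimes> a) v = v"
    using act_mult[OF inv_closed[OF bc] ac v] act_inv_left[OF bc v] a_def b_def by simp
  then have "act (inv b \<otimes> a) x = x"
    using semireg N.m_closed[OF N.m_inv_closed[OF b(1)] a(1)] v by blast
  then have "act b (act (inv b) (act a x)) = act b x"
    using act_mult[OF inv_closed[OF bc] ac x] by simp
  then have "act a x = act b x" using act_inv_right[OF bc act_closed[OF ac x]] by simp
  then show False using a b \<open>y \<noteq> y'\<close> by simp
qed

lemma derangement_clique_transporters: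
  assumes x: "x \<in> V" and semireg: "\<forall>n\<in>N. \<forall>v\<in>V. act n v = v \<longrightarrow> act n x = x"
  shows "derangement_clique V act (transporter x ` orbit x)"
  using transporter_separates[OF x semireg] unfolding derangement_clique_def by blast

lemma sharply_transitive_subset_if_transitive:
  assumes comm: "acts_commutatively" and transitive: "\<And>x. x \<in> V \<Longrightarrow> orbit x = V"
  shows "\<exists>C. sharply_transitive_subset G V act C"
proof -
  obtain x where x: "x \<in> V" using V_nonempty by blast
  have "\<forall>n\<in>N. \<forall>v\<in>V. act n v = v \<longrightarrow> act n x = x"
    using fixes_orbit[OF comm] transitive x by blast
  then have "derangement_clique V act (transporter x ` orbit x)"
    by (rule derangement_clique_transporters[OF x])
  moreover have "transporter x ` orbit x \<subseteq> carrier G" using transporter_mem N.subset by blast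
  moreover have "card (transporter x ` orbit x) = card V"
    using card_image[OF inj_on_transporter, of x] transitive[OF x] by simp
  ultimately show ?thesis unfolding sharply_transitive_subset_def by blast
qed

lemma transitive_if_edge_within_orbit:
  assumes uw: "E u w" and w: "w \<in> orbit u" and x: "x \<in> V" shows "orbit x = V"
proof
  have edge: "b \<in> orbit a" if ab: "E a b" for a b
  proof -
    obtain g where g: "g \<in> carrier G" "act g u = a" "act g w = b"
      using arc_transitive[OF uw ab] by blast
    show ?thesis using act_orbit[OF g(1) edge_fst[OF uw] w] g by simp
  qed
  show "V \<subseteq> orbit x"
  proof
    fix y assume "y \<in> V"
    with x have "E\<^sup>*\<^sup>* x y" by (rule connected)
    then show "y \<in> orbit x"
      by (induction rule: rtranclp_induct) (use orbit_self[OF x] orbit_trans[OF x] edge in blast)+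
  qed
qed (rule orbit_subset[OF x])

lemma edge_leaves_orbit: "\<exists>x\<in>V. orbit x \<noteq> V \<Longrightarrow> E u w \<Longrightarrow> w \<notin> orbit u"
  using transitive_if_edge_within_orbit by blast

text \<open>The \<open>N\<close>-orbits cut the \<open>p\<close> neighbours of \<open>v\<close> into blocks which the stabiliser of \<open>v\<close>
  permutes transitively, so all blocks have the same size; a block with two elements has size \<open>p\<close>.\<close>
lemma neighbours_in_one_orbit:
  assumes vw: "E v w" and vw': "E v w'" and "w \<noteq> w'" and "w' \<in> orbit w" and vy: "E v y"
  shows "y \<in> orbit w"
proof -
  define Nb where "Nb = {y. E v y}"
  have finite_Nb: "finite Nb" unfolding Nb_def by (rule finite_neighbours)
  have Nb_V: "Nb \<subseteq> V" unfolding Nb_def using edge_snd by blast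
  have block_le: "card (Nb \<inter> orbit y1) \<le> card (Nb \<inter> orbit y2)" if y1: "y1 \<in> Nb"
    and y2: "y2 \<in> Nb" for y1 y2
  proof -
    obtain g where g: "g \<in> carrier G" "act g v = v" "act g y1 = y2"
      using arc_transitive y1 y2 unfolding Nb_def by blast
    show ?thesis
    proof (rule card_inj_on_le)
      show "inj_on (act g) (Nb \<inter> orbit y1)" using act_inj[OF g(1)] Nb_V by (auto intro: inj_onI)
      show "act g ` (Nb \<inter> orbit y1) \<subseteq> Nb \<inter> orbit y2"
        using act_edge[OF g(1)] g act_orbit[OF g(1)] Nb_V y1 unfolding Nb_def by fastforce
    qed (use finite_Nb in simp)
  qed
  define s where "s = card (Nb \<inter> orbit w)"
  have w: "w \<in> Nb" and w': "w' \<in> Nb" using vw vw' unfolding Nb_def by auto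
  define P where "P = (\<lambda>y. Nb \<inter> orbit y) ` Nb"
  have "s * card P = card (\<Union>P)"
  proof (rule card_partition)
    show "finite P" "finite (\<Union>P)" unfolding P_def using finite_Nb by simp_all
    show "\<And>c. c \<in> P \<Longrightarrow> card c = s" unfolding P_def s_def using block_le w le_antisym by blast
    show "\<And>c1 c2. c1 \<in> P \<Longrightarrow> c2 \<in> P \<Longrightarrow> c1 \<noteq> c2 \<Longrightarrow> c1 \<inter> c2 = {}"
      unfolding P_def using orbit_eq_if_meet Nb_V by blast
  qed
  moreover have "\<Union>P = Nb" unfolding P_def using orbit_self Nb_V by blast
  ultimately have "s dvd p"
    using regular[OF edge_fst[OF vw]] unfolding Nb_def by (metis dvd_triv_left)
  moreover have "2 \<le> s"
  proof -
    have "{w, w'} \<subseteq> Nb \<inter> orbit w" using w w' \<open>w' \<in> orbit w\<close> orbit_self Nb_V by blast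
    then show ?thesis using card_mono[OF _ \<open>{w, w'} \<subseteq> _\<close>] finite_Nb \<open>w \<noteq> w'\<close> unfolding s_def by simp
  qed
  ultimately have "s = card Nb"
    using prime_valency regular[OF edge_fst[OF vw]] unfolding prime_nat_iff Nb_def s_def by auto
  then have "Nb \<inter> orbit w = Nb" using card_subset_eq[OF finite_Nb] unfolding s_def by blast
  then show ?thesis using vy unfolding Nb_def by blast
qed

lemma neighbours_of_translate:
  assumes g: "g \<in> carrier G" and x: "x \<in> V" and y: "y \<in> V" and nb: "\<And>z. E x z \<Longrightarrow> z \<in> orbit y"
    and e: "E (act g x) b"
  shows "b \<in> orbit (act g y)"
proof -
  have "E x (act (inv g) b)"
    using act_edge[OF inv_closed[OF g] e] act_inv_left[OF g x] by simp
  then have "act g (act (inv g) b) \<in> orbit (act g y)" using act_orbit[OF g y] nb by blast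
  then show ?thesis using act_inv_right[OF g edge_snd[OF e]] by simp
qed

lemma orbit_bipartition:
  assumes intransitive: "\<exists>x\<in>V. orbit x \<noteq> V"
    and vw: "E v w" and vw': "E v w'" and "w \<noteq> w'" and "w' \<in> orbit w"
  shows "V = orbit v \<union> orbit w" and "orbit v \<inter> orbit w = {}"
    and "\<And>a b. E a b \<Longrightarrow> a \<in> orbit v \<Longrightarrow> b \<in> orbit w"
    and "\<And>a b. E a b \<Longrightarrow> a \<in> orbit w \<Longrightarrow> b \<in> orbit v"
proof -
  have v: "v \<in> V" and w: "w \<in> V" using edge_fst[OF vw] edge_snd[OF vw] .
  have nb_v: "E v z \<Longrightarrow> z \<in> orbit w" for z
    using neighbours_in_one_orbit[OF vw vw' \<open>w \<noteq> w'\<close> \<open>w' \<in> orbit w\<close>] .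
  obtain g where g: "g \<in> carrier G" "act g v = w" "act g w = v"
    using arc_transitive[OF vw edge_sym[OF vw]] by blast
  have nb_w: "E w z \<Longrightarrow> z \<in> orbit v" for z using neighbours_of_translate[OF g(1) v w nb_v] g by simp
  show from_v: "b \<in> orbit w" if "E a b" "a \<in> orbit v" for a b
  proof -
    obtain n where "n \<in> N" "a = act n v" using orbit_memE \<open>a \<in> orbit v\<close> by metis
    then show ?thesis
      using neighbours_of_translate[OF N.mem_carrier v w nb_v] \<open>E a b\<close> orbit_eq[OF w orbit_memI]
        by metis
  qed
  show from_w: "b \<in> orbit v" if "E a b" "a \<in> orbit w" for a b
  proof -
    obtain n where "n \<in> N" "a = act n w" using orbit_memE \<open>a \<in> orbit w\<close> by metis
    then show ?thesis
      using neighbours_of_translate[OF N.mem_carrier w v nb_w] \<open>E a b\<close> orbit_eq[OF v orbit_memI]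
        by metis
  qed
  show "V = orbit v \<union> orbit w"
  proof
    show "V \<subseteq> orbit v \<union> orbit w"
    proof
      fix x assume "x \<in> V"
      with v have "E\<^sup>*\<^sup>* v x" by (rule connected)
      then show "x \<in> orbit v \<union> orbit w"
        by (induction rule: rtranclp_induct) (use orbit_self[OF v] from_v from_w in blast)+
    qed
  qed (use orbit_subset v w in blast)
  show "orbit v \<inter> orbit w = {}"
    using orbit_eq_if_meet[OF v w] orbit_self[OF w] edge_leaves_orbit[OF intransitive vw] by blast
qed

section \<open>Normal quotients\<close>

text \<open>The normal quotient: its vertices are the \<open>N\<close>-orbits, each represented by a chosen point,
  so that the quotient graph has the same vertex type as the original one.\<close>
definition orbit_rep where "orbit_rep y = (SOME z. z \<in> orbit y)"

definition quotient_vertices where "quotient_vertices = orbit_rep ` V"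

definition quotient_edge where "quotient_edge r r' \<longleftrightarrow>
  r \<in> quotient_vertices \<and> r' \<in> quotient_vertices \<and> (\<exists>u\<in>orbit r. \<exists>u'\<in>orbit r'. E u u')"

definition quotient_act where "quotient_act g r = orbit_rep (act g r)"

lemma orbit_rep_in: assumes "y \<in> V" shows "orbit_rep y \<in> orbit y"
  unfolding orbit_rep_def by (rule someI[where x = y]) (rule orbit_self[OF assms])

lemma orbit_rep_closed: "y \<in> V \<Longrightarrow> orbit_rep y \<in> V"
  using orbit_rep_in orbit_subset by blast

lemma orbit_orbit_rep: "y \<in> V \<Longrightarrow> orbit (orbit_rep y) = orbit y"
  by (rule orbit_eq[OF _ orbit_rep_in])

lemma mem_orbit_orbit_rep: "y \<in> V \<Longrightarrow> y \<in> orbit (orbit_rep y)"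
  using orbit_orbit_rep orbit_self by simp

lemma orbit_rep_cong: "orbit y = orbit y' \<Longrightarrow> orbit_rep y = orbit_rep y'"
  unfolding orbit_rep_def by simp

lemma orbit_rep_eq_iff: "y \<in> V \<Longrightarrow> y' \<in> V \<Longrightarrow> orbit_rep y = orbit_rep y' \<longleftrightarrow> orbit y = orbit y'"
  using orbit_rep_cong orbit_orbit_rep by metis

lemma quotient_vertices_subset: "quotient_vertices \<subseteq> V"
  unfolding quotient_vertices_def using orbit_rep_closed by blast

lemma orbit_rep_idem: "r \<in> quotient_vertices \<Longrightarrow> orbit_rep r = r"
  unfolding quotient_vertices_def using orbit_rep_cong orbit_orbit_rep by blast

lemma orbit_rep_act:
  assumes g: "g \<in> carrier G" and y: "y \<in> V"
  shows "orbit_rep (act g (orbit_rep y)) = orbit_rep (act g y)"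
  using act_orbit[OF g y orbit_rep_in[OF y]] orbit_eq[OF act_closed[OF g y]] orbit_rep_cong by blast

lemma card_orbit_mult_card_quotient:
  assumes x: "x \<in> V" shows "card (orbit x) * card quotient_vertices = card V"
proof -
  define P where "P = orbit ` V"
  have union: "\<Union>P = V" unfolding P_def using orbit_subset orbit_self by blast
  have "card (orbit x) * card P = card (\<Union>P)"
  proof (rule card_partition)
    show "finite P" unfolding P_def using finite_V by simp
    show "finite (\<Union>P)" using union finite_V by simp
    show "\<And>c. c \<in> P \<Longrightarrow> card c = card (orbit x)" unfolding P_def using card_orbit_eq[OF _ x] by blast
    show "\<And>c1 c2. c1 \<in> P \<Longrightarrow> c2 \<in> P \<Longrightarrow> c1 \<noteq> c2 \<Longrightarrow> c1 \<inter> c2 = {}"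
      unfolding P_def using orbit_eq_if_meet by blast
  qed
  moreover have "P = orbit ` quotient_vertices"
    unfolding P_def quotient_vertices_def using orbit_orbit_rep by (auto simp: image_iff)
  moreover have "inj_on orbit quotient_vertices"
    using orbit_rep_cong orbit_rep_idem by (metis inj_onI)
  ultimately show ?thesis using union card_image by metis
qed

lemma card_quotient_vertices_less:
  assumes "\<exists>n\<in>N. \<exists>x\<in>V. act n x \<noteq> x" shows "card quotient_vertices < card V"
proof -
  obtain n x where n: "n \<in> N" and x: "x \<in> V" and nx: "act n x \<noteq> x" using assms by blast
  have "orbit_rep (act n x) = orbit_rep x"
    by (rule orbit_rep_cong[OF orbit_eq[OF x orbit_memI[OF n]]])
  then have "\<not> inj_on orbit_rep V"
    using nx act_closed[OF N.mem_carrier[OF n] x] x unfolding inj_on_def by metis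
  then show ?thesis
    unfolding quotient_vertices_def using card_image_le[OF finite_V] inj_on_iff_eq_card[OF finite_V]
    by (metis le_neq_implies_less)
qed

lemma quotient_edge_iff:
  "quotient_edge r r' \<longleftrightarrow> r \<in> quotient_vertices \<and> r' \<in> orbit_rep ` {w. E r w}"
proof
  assume "quotient_edge r r'"
  then obtain u u' where r: "r \<in> quotient_vertices" and r': "r' \<in> quotient_vertices"
    and u: "u \<in> orbit r" and u': "u' \<in> orbit r'" and uu': "E u u'"
    unfolding quotient_edge_def by blast
  obtain n where n: "n \<in> N" "u = act n r" using u orbit_memE by metis
  have rV: "r \<in> V" and r'V: "r' \<in> V" using r r' quotient_vertices_subset by auto
  have "E (act (inv n) u) (act (inv n) u')"
    by (rule act_edge[OF inv_closed[OF N.mem_carrier[OF n(1)]] uu'])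
  then have e: "E r (act (inv n) u')" using n act_inv_left[OF N.mem_carrier[OF n(1)] rV] by simp
  have "orbit (act (inv n) u') = orbit r'"
    using orbit_eq[OF edge_snd[OF uu'] orbit_memI[OF N.m_inv_closed[OF n(1)]]] orbit_eq[OF r'V u']
      by simp
  then have "orbit_rep (act (inv n) u') = r'"
    using orbit_rep_cong orbit_rep_idem[OF r'] orbit_orbit_rep[OF r'V] by metis
  then show "r \<in> quotient_vertices \<and> r' \<in> orbit_rep ` {w. E r w}" using r e by blast
next
  assume "r \<in> quotient_vertices \<and> r' \<in> orbit_rep ` {w. E r w}"
  then obtain w where r: "r \<in> quotient_vertices" and w: "E r w" "r' = orbit_rep w" by blast
  have "r' \<in> quotient_vertices" using w edge_snd unfolding quotient_vertices_def by blast
  moreover have "w \<in> orbit r'" using w mem_orbit_orbit_rep[OF edge_snd] by blast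
  ultimately show "quotient_edge r r'"
    unfolding quotient_edge_def using r w(1) orbit_self[OF edge_fst[OF w(1)]] by blast
qed

lemma quotient_connected:
  assumes u: "u \<in> quotient_vertices" and v: "v \<in> quotient_vertices" shows "quotient_edge\<^sup>*\<^sup>* u v"
proof -
  have "quotient_edge\<^sup>*\<^sup>* (orbit_rep u) (orbit_rep v)"
    using connected[OF subsetD[OF quotient_vertices_subset u]
        subsetD[OF quotient_vertices_subset v]]
  proof (induction rule: rtranclp_induct)
    case (step y z)
    have "quotient_edge (orbit_rep y) (orbit_rep z)"
      unfolding quotient_edge_def quotient_vertices_def
      using step(2) edge_fst edge_snd mem_orbit_orbit_rep by blast
    then show ?case using step(3) by simp
  qed simp
  then show ?thesis using orbit_rep_idem u v by simp
qed

lemma quotient_act_edge: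
  assumes g: "g \<in> carrier G" and e: "quotient_edge u v"
  shows "quotient_edge (quotient_act g u) (quotient_act g v)"
proof -
  obtain a b where u: "u \<in> quotient_vertices" and v: "v \<in> quotient_vertices"
    and a: "a \<in> orbit u" and b: "b \<in> orbit v" and ab: "E a b"
    using e unfolding quotient_edge_def by blast
  have uV: "u \<in> V" and vV: "v \<in> V" using u v quotient_vertices_subset by auto
  have "act g a \<in> orbit (quotient_act g u)" "act g b \<in> orbit (quotient_act g v)"
    unfolding quotient_act_def using act_orbit[OF g uV a] act_orbit[OF g vV b]
      orbit_orbit_rep[OF act_closed[OF g uV]] orbit_orbit_rep[OF act_closed[OF g vV]] by simp_all
  moreover have "quotient_act g u \<in> quotient_vertices" "quotient_act g v \<in> quotient_vertices"
    unfolding quotient_act_def quotient_vertices_def using act_closed[OF g] uV vV by auto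
  ultimately show ?thesis unfolding quotient_edge_def using act_edge[OF g ab] by blast
qed

lemma quotient_arc_transitive:
  assumes e: "quotient_edge u v" and e': "quotient_edge u' v'"
  shows "\<exists>g\<in>carrier G. quotient_act g u = u' \<and> quotient_act g v = v'"
proof -
  obtain a b where u: "u \<in> quotient_vertices" and v: "v \<in> quotient_vertices"
    and a: "a \<in> orbit u" and b: "b \<in> orbit v" and ab: "E a b"
    using e unfolding quotient_edge_def by blast
  obtain a' b' where u': "u' \<in> quotient_vertices" and v': "v' \<in> quotient_vertices"
    and a': "a' \<in> orbit u'" and b': "b' \<in> orbit v'" and ab': "E a' b'"
    using e' unfolding quotient_edge_def by blast
  obtain g where g: "g \<in> carrier G" "act g a = a'" "act g b = b'"
    using arc_transitive[OF ab ab'] by blast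
  have moves: "quotient_act g x = x'"
    if x: "x \<in> quotient_vertices" and x': "x' \<in> quotient_vertices" and c: "c \<in> orbit x"
      and c': "act g c \<in> orbit x'" for x x' c
  proof -
    have xV: "x \<in> V" and x'V: "x' \<in> V" using x x' quotient_vertices_subset by auto
    have "orbit (act g x) = orbit x'"
      using orbit_eq[OF act_closed[OF g(1) xV] act_orbit[OF g(1) xV c]] orbit_eq[OF x'V c'] by simp
    then show ?thesis unfolding quotient_act_def using orbit_rep_cong orbit_rep_idem[OF x'] by metis
  qed
  show ?thesis using moves[OF u u' a] moves[OF v v' b] g a' b' by blast
qed

context
  assumes neighbours_in_distinct_orbits: "\<And>v w w'. E v w \<Longrightarrow> E v w' \<Longrightarrow> w' \<in> orbit w \<Longrightarrow> w = w'"
begin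

lemma semiregular:
  assumes n: "n \<in> N" and v: "v \<in> V" and fixed: "act n v = v" and x: "x \<in> V"
  shows "act n x = x"
  using connected[OF v x]
proof (induction rule: rtranclp_induct)
  case (step y z)
  have "E y (act n z)" using act_edge[OF N.mem_carrier[OF n] step(2)] step(3) by simp
  then show ?case using neighbours_in_distinct_orbits step(2) orbit_memI[OF n] by metis
qed (rule fixed)

lemma quotient_regular:
  assumes r: "r \<in> quotient_vertices" shows "card {r'. quotient_edge r r'} = p"
proof -
  have rV: "r \<in> V" using r quotient_vertices_subset by blast
  have "inj_on orbit_rep {w. E r w}"
  proof (rule inj_onI)
    fix a b assume a: "a \<in> {w. E r w}" and b: "b \<in> {w. E r w}" and "orbit_rep a = orbit_rep b"
    then have "b \<in> orbit a"
      using orbit_rep_eq_iff[OF edge_snd edge_snd] orbit_self[OF edge_snd] by blast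
    then show "a = b" using neighbours_in_distinct_orbits a b by blast
  qed
  moreover have "{r'. quotient_edge r r'} = orbit_rep ` {w. E r w}"
    using quotient_edge_iff r by blast
  ultimately show ?thesis using card_image regular[OF rV] by metis
qed

text \<open>Points of one orbit are told apart by the transporters (as \<open>N\<close> is semiregular), points of
  different orbits by the lifted derangement clique of the quotient.\<close>
lemma lifted_transporters_separate:
  assumes clique: "derangement_clique quotient_vertices quotient_act C'" and C'G: "C' \<subseteq> carrier G"
    and x: "x \<in> V" and c: "c \<in> C'" and d: "d \<in> C'" and y: "y \<in> orbit x" and y': "y' \<in> orbit x"
    and ne: "(c, y) \<noteq> (d, y')" and v: "v \<in> V"
  shows "act (c \<otimes> transporter x y) v \<noteq> act (d \<otimes> transporter x y') v"
proof -
  have cG: "c \<in> carrier G" and dG: "d \<in> carrier G" using c d C'G by auto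
  have ty: "act (transporter x y) v \<in> orbit (orbit_rep v)"
    and ty': "act (transporter x y') v \<in> orbit (orbit_rep v)"
    using orbit_memI[OF transporter_mem[OF y]] orbit_memI[OF transporter_mem[OF y']]
      orbit_orbit_rep[OF v] by auto
  have "act (transporter x y) v \<in> V" "act (transporter x y') v \<in> V"
    using ty ty' orbit_subset[OF orbit_rep_closed[OF v]] by auto
  then have act_c: "act (c \<otimes> transporter x y) v = act c (act (transporter x y) v)"
    and act_d: "act (d \<otimes> transporter x y') v = act d (act (transporter x y') v)"
    using act_mult cG dG N.mem_carrier[OF transporter_mem] y y' v by auto
  show ?thesis
  proof (cases "c = d")
    case True
    have "\<forall>n\<in>N. \<forall>u\<in>V. act n u = u \<longrightarrow> act n x = x" using semiregular x by blast
    moreover have "y \<noteq> y'" using ne True by simp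
    ultimately have "act (transporter x y) v \<noteq> act (transporter x y') v"
      using transporter_separates[OF x _ y y' _ v] by blast
    then show ?thesis using act_c act_d act_inj[OF dG] \<open>act (transporter x y) v \<in> V\<close>
        \<open>act (transporter x y') v \<in> V\<close> True by auto
  next
    case False
    have r: "orbit_rep v \<in> quotient_vertices" unfolding quotient_vertices_def using v by blast
    have rV: "orbit_rep v \<in> V" using orbit_rep_closed[OF v] .
    show ?thesis
    proof
      assume eq: "act (c \<otimes> transporter x y) v = act (d \<otimes> transporter x y') v"
      have "act (c \<otimes> transporter x y) v \<in> orbit (act c (orbit_rep v))"
        using act_c act_orbit[OF cG rV ty] by simp
      moreover have "act (c \<otimes> transporter x y) v \<in> orbit (act d (orbit_rep v))"
        using eq act_d act_orbit[OF dG rV ty'] by simp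
      ultimately have "orbit (act c (orbit_rep v)) = orbit (act d (orbit_rep v))"
        by (rule orbit_eq_if_meet[OF act_closed[OF cG rV] act_closed[OF dG rV]])
      then have "quotient_act c (orbit_rep v) = quotient_act d (orbit_rep v)"
        unfolding quotient_act_def by (rule orbit_rep_cong)
      then show False using clique c d False r unfolding derangement_clique_def by blast
    qed
  qed
qed

lemma sharply_transitive_subset_lift:
  assumes "sharply_transitive_subset G quotient_vertices quotient_act C'"
  shows "\<exists>C. sharply_transitive_subset G V act C"
proof -
  have C'G: "C' \<subseteq> carrier G" and card_C': "card C' = card quotient_vertices"
    and clique: "derangement_clique quotient_vertices quotient_act C'"
    using assms unfolding sharply_transitive_subset_def by auto
  obtain x where x: "x \<in> V" using V_nonempty by blast
  define f where "f = (\<lambda>(c, y). c \<otimes> transporter x y)"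
  define C where "C = f ` (C' \<times> orbit x)"
  note separate = lifted_transporters_separate[OF clique C'G x]
  have "inj_on f (C' \<times> orbit x)"
  proof (rule inj_onI)
    fix a b assume a: "a \<in> C' \<times> orbit x" and b: "b \<in> C' \<times> orbit x" and eq: "f a = f b"
    obtain c y d y' where "a = (c, y)" "b = (d, y')" by (cases a, cases b)
    then show "a = b" using separate[of c d y y' x] a b eq x unfolding f_def by auto
  qed
  then have "card C = card C' * card (orbit x)" unfolding C_def
    by (simp add: card_image card_cartesian_product)
  also have "\<dots> = card V"
    using card_C' card_orbit_mult_card_quotient[OF x] by (simp add: mult.commute)
  finally have "card C = card V" .
  moreover have "C \<subseteq> carrier G" unfolding C_def f_def using C'G transporter_mem N.subset by auto
  moreover have "derangement_clique V act C"
    unfolding derangement_clique_def C_def f_def using separate by fast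
  ultimately show ?thesis unfolding sharply_transitive_subset_def by blast
qed

end

lemma quotient_arc_transitive_action:
  assumes intransitive: "\<exists>x\<in>V. orbit x \<noteq> V"
    and neighbours_in_distinct_orbits: "\<And>v w w'. E v w \<Longrightarrow> E v w' \<Longrightarrow> w' \<in> orbit w \<Longrightarrow> w = w'"
  shows "arc_transitive_action G p quotient_vertices quotient_edge quotient_act"
proof (unfold_locales)
  show "finite quotient_vertices" using finite_subset[OF quotient_vertices_subset finite_V] .
  show "quotient_vertices \<noteq> {}" unfolding quotient_vertices_def using V_nonempty by simp
  show "\<not> quotient_edge v v" for v
    unfolding quotient_edge_def using orbit_eq quotient_vertices_subset edge_leaves_orbit[OF intransitive]
    by blast
  show "card {w. quotient_edge v w} = p" if "v \<in> quotient_vertices" for v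
    by (rule quotient_regular) (use neighbours_in_distinct_orbits that in blast)+
  show "quotient_act (g \<otimes> h) v = quotient_act g (quotient_act h v)"
    if "g \<in> carrier G" "h \<in> carrier G" "v \<in> quotient_vertices" for g h v
    unfolding quotient_act_def
    using orbit_rep_act[OF that(1) act_closed[OF that(2)]] act_mult that quotient_vertices_subset by auto
  show "quotient_act \<one> v = v" if "v \<in> quotient_vertices" for v
    unfolding quotient_act_def using act_one orbit_rep_idem quotient_vertices_subset that by auto
  show "quotient_act g v \<in> quotient_vertices" if "g \<in> carrier G" "v \<in> quotient_vertices" for g v
    unfolding quotient_act_def quotient_vertices_def using act_closed quotient_vertices_subset that by auto
  show "quotient_edge u v \<Longrightarrow> u \<in> quotient_vertices" for u v unfolding quotient_edge_def by blast
  show "quotient_edge u v \<Longrightarrow> v \<in> quotient_vertices" for u v unfolding quotient_edge_def by blast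
  show "quotient_edge u v \<Longrightarrow> quotient_edge v u" for u v
    unfolding quotient_edge_def using edge_sym by blast
qed (simp_all add: prime_valency quotient_connected quotient_act_edge quotient_arc_transitive)

lemma sharply_transitive_subset_via_quotient:
  assumes IH: "\<And>(V' :: 'v set) E' act'. card V' < card V \<Longrightarrow> arc_transitive_action G p V' E' act' \<Longrightarrow>
      \<exists>C. sharply_transitive_subset G V' act' C"
    and nontrivial: "\<exists>n\<in>N. \<exists>x\<in>V. act n x \<noteq> x"
    and intransitive: "\<exists>x\<in>V. orbit x \<noteq> V"
    and neighbours_in_distinct_orbits: "\<And>v w w'. E v w \<Longrightarrow> E v w' \<Longrightarrow> w' \<in> orbit w \<Longrightarrow> w = w'"
  shows "\<exists>C. sharply_transitive_subset G V act C"
proof -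
  have "arc_transitive_action G p quotient_vertices quotient_edge quotient_act"
    by (rule quotient_arc_transitive_action)
      (use intransitive neighbours_in_distinct_orbits in blast)+
  then obtain C' where "sharply_transitive_subset G quotient_vertices quotient_act C'"
    using IH[OF card_quotient_vertices_less[OF nontrivial]] by blast
  then show ?thesis
    by (rule sharply_transitive_subset_lift[rotated])
      (use neighbours_in_distinct_orbits in blast)
qed


section \<open>The bipartite case\<close>

definition pointwise_stabilizer where "pointwise_stabilizer X = {k \<in> N. \<forall>x\<in>X. act k x = x}"

lemma pointwise_stabilizer_subgroup:
  assumes X: "X \<subseteq> V" shows "subgroup (pointwise_stabilizer X) G"
proof (rule subgroup.intro)
  show "pointwise_stabilizer X \<subseteq> carrier G" unfolding pointwise_stabilizer_def
    using N.subset by blast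
  show "\<one> \<in> pointwise_stabilizer X" unfolding pointwise_stabilizer_def using act_one X by auto
  show "a \<otimes> b \<in> pointwise_stabilizer X"
    if "a \<in> pointwise_stabilizer X" "b \<in> pointwise_stabilizer X" for a b
    using that X act_mult unfolding pointwise_stabilizer_def by auto
  show "inv a \<in> pointwise_stabilizer X" if "a \<in> pointwise_stabilizer X" for a
    using that X act_inv_left[of a] unfolding pointwise_stabilizer_def by fastforce
qed

lemma conj_pointwise_stabilizer:
  assumes g: "g \<in> carrier G" and k: "k \<in> pointwise_stabilizer X" and Y: "Y \<subseteq> V"
    and maps: "\<And>y. y \<in> Y \<Longrightarrow> act (inv g) y \<in> X"
  shows "g \<otimes> k \<otimes> inv g \<in> pointwise_stabilizer Y"
proof -
  have "act (g \<otimes> k \<otimes> inv g) y = y" if "y \<in> Y" for y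
    using act_conj[OF g N.mem_carrier] act_inv_right[OF g] k maps that Y
    unfolding pointwise_stabilizer_def by auto
  then show ?thesis using N.inv_op_closed2[OF g] k unfolding pointwise_stabilizer_def by blast
qed

text \<open>Products \<open>k \<otimes> l\<close> are taken modulo the kernel of the action, so that closure under
  multiplication only needs \<open>k\<close> and \<open>l\<close> to commute on \<open>V\<close>.\<close>
definition stabilizer_product where "stabilizer_product X Y =
  {n \<in> N. \<exists>k\<in>pointwise_stabilizer X. \<exists>l\<in>pointwise_stabilizer Y. \<forall>x\<in>V. act n x = act (k \<otimes> l) x}"

context
  fixes X Y
  assumes comm: "acts_commutatively" and X: "X \<subseteq> V" and Y: "Y \<subseteq> V"
begin

interpretation K: subgroup "pointwise_stabilizer X" G by (rule pointwise_stabilizer_subgroup[OF X])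
interpretation L: subgroup "pointwise_stabilizer Y" G by (rule pointwise_stabilizer_subgroup[OF Y])

lemma pointwise_stabilizers_commute:
  "k \<in> pointwise_stabilizer X \<Longrightarrow> l \<in> pointwise_stabilizer Y \<Longrightarrow> x \<in> V \<Longrightarrow>
    act k (act l x) = act l (act k x)"
  using comm unfolding acts_commutatively_def pointwise_stabilizer_def by blast

lemma stabilizer_product_mult_closed:
  assumes "n \<in> stabilizer_product X Y" and "n' \<in> stabilizer_product X Y"
  shows "n \<otimes> n' \<in> stabilizer_product X Y"
proof -
  obtain k l k' l' where n: "n \<in> N" "k \<in> pointwise_stabilizer X" "l \<in> pointwise_stabilizer Y"
    "\<forall>x\<in>V. act n x = act (k \<otimes> l) x"
    and n': "n' \<in> N" "k' \<in> pointwise_stabilizer X" "l' \<in> pointwise_stabilizer Y"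
    "\<forall>x\<in>V. act n' x = act (k' \<otimes> l') x"
    using assms unfolding stabilizer_product_def by blast
  have "act (n \<otimes> n') x = act ((k \<otimes> k') \<otimes> (l \<otimes> l')) x" if x: "x \<in> V" for x
  proof -
    have "act (n \<otimes> n') x = act k (act l (act k' (act l' x)))"
      using n n' x act_mult act_closed by simp
    also have "\<dots> = act k (act k' (act l (act l' x)))"
      using pointwise_stabilizers_commute[OF n'(2) n(3) act_closed[OF L.mem_carrier[OF n'(3)] x]]
        by simp
    also have "\<dots> = act ((k \<otimes> k') \<otimes> (l \<otimes> l')) x" using n n' x act_mult act_closed by simp
    finally show ?thesis .
  qed
  then show ?thesis unfolding stabilizer_product_def
    using n n' N.m_closed K.m_closed L.m_closed by blast
qed

lemma stabilizer_product_inv_closed: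
  assumes "n \<in> stabilizer_product X Y" shows "inv n \<in> stabilizer_product X Y"
proof -
  obtain k l where n: "n \<in> N" "k \<in> pointwise_stabilizer X" "l \<in> pointwise_stabilizer Y"
    "\<forall>x\<in>V. act n x = act (k \<otimes> l) x"
    using assms unfolding stabilizer_product_def by blast
  have kG: "k \<in> carrier G" and lG: "l \<in> carrier G" using n by auto
  have "act (inv n) x = act (inv k \<otimes> inv l) x" if x: "x \<in> V" for x
  proof -
    have "act (inv n) x = act (inv l \<otimes> inv k) x"
      using act_inv_cong[OF N.mem_carrier[OF n(1)] m_closed[OF kG lG] n(4) x]
        inv_mult_group[OF kG lG] by simp
    also have "\<dots> = act (inv k \<otimes> inv l) x"
      using pointwise_stabilizers_commute[OF K.m_inv_closed[OF n(2)] L.m_inv_closed[OF n(3)] x]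
        act_mult[OF inv_closed[OF kG] inv_closed[OF lG] x]
        act_mult[OF inv_closed[OF lG] inv_closed[OF kG] x]
      by simp
    finally show ?thesis .
  qed
  then show ?thesis unfolding stabilizer_product_def
    using n N.m_inv_closed K.m_inv_closed L.m_inv_closed by blast
qed

lemma stabilizer_product_subgroup: "subgroup (stabilizer_product X Y) G"
proof (rule subgroup.intro)
  show "stabilizer_product X Y \<subseteq> carrier G" unfolding stabilizer_product_def using N.subset by blast
  have "\<forall>x\<in>V. act \<one> x = act (\<one> \<otimes> \<one>) x" by simp
  then show "\<one> \<in> stabilizer_product X Y"
    unfolding stabilizer_product_def using K.one_closed L.one_closed N.one_closed by blast
qed (use stabilizer_product_mult_closed stabilizer_product_inv_closed in auto)

end

context
  fixes v0 w0 t
  assumes comm: "acts_commutatively"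
    and edge0: "E v0 w0"
    and halves_cover: "V = orbit v0 \<union> orbit w0" and halves_disjoint: "orbit v0 \<inter> orbit w0 = {}"
    and edge_to_w0: "\<And>a b. E a b \<Longrightarrow> a \<in> orbit v0 \<Longrightarrow> b \<in> orbit w0"
    and edge_to_v0: "\<And>a b. E a b \<Longrightarrow> a \<in> orbit w0 \<Longrightarrow> b \<in> orbit v0"
    and t: "t \<in> carrier G" and t_v0: "act t v0 = w0" and t_w0: "act t w0 = v0"
begin

lemma v0: "v0 \<in> V" and w0: "w0 \<in> V"
  using edge_fst[OF edge0] edge_snd[OF edge0] .

lemma act_preserves_or_swaps_halves:
  assumes g: "g \<in> carrier G"
  shows "act g ` orbit v0 \<subseteq> orbit v0 \<and> act g ` orbit w0 \<subseteq> orbit w0 \<or>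
    act g ` orbit v0 \<subseteq> orbit w0 \<and> act g ` orbit w0 \<subseteq> orbit v0"
proof -
  have image: "act g ` orbit z \<subseteq> orbit (act g z)" if "z \<in> V" for z
    using act_orbit[OF g that] by blast
  have "E (act g v0) (act g w0)" by (rule act_edge[OF g edge0])
  then consider "act g v0 \<in> orbit v0" "act g w0 \<in> orbit w0"
    | "act g v0 \<in> orbit w0" "act g w0 \<in> orbit v0"
    using halves_cover edge_to_w0 edge_to_v0 edge_fst by blast
  then show ?thesis
  proof cases
    case 1
    then have "orbit (act g v0) = orbit v0" "orbit (act g w0) = orbit w0"
      using orbit_eq[OF v0] orbit_eq[OF w0] by blast+
    then show ?thesis using image[OF v0] image[OF w0] by simp
  next
    case 2
    then have "orbit (act g v0) = orbit w0" "orbit (act g w0) = orbit v0"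
      using orbit_eq[OF w0] orbit_eq[OF v0] by blast+
    then show ?thesis using image[OF v0] image[OF w0] by simp
  qed
qed

lemma t_swaps_halves: "x \<in> orbit v0 \<Longrightarrow> act t x \<in> orbit w0" "x \<in> orbit w0 \<Longrightarrow> act t x \<in> orbit v0"
  using act_orbit[OF t v0] act_orbit[OF t w0] t_v0 t_w0 by auto

text \<open>Elements of \<open>D\<close> preserve the two halves while those of \<open>t D\<close> swap them.\<close>
lemma derangement_clique_union_translate:
  assumes D: "D \<subseteq> N" and clique: "derangement_clique V act D"
  shows "derangement_clique V act (D \<union> (\<otimes>) t ` D)" and "D \<inter> (\<otimes>) t ` D = {}"
proof -
  have DG: "D \<subseteq> carrier G" using D N.subset by blast
  have t_act: "act (t \<otimes> d) x = act t (act d x)" if "d \<in> D" "x \<in> V" for d x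
    using act_mult[OF t] DG that by blast
  have dN: "d \<in> N" if "d \<in> D" for d using that D by blast
  have across: "act d x \<noteq> act (t \<otimes> d') x" if d: "d \<in> D" and d': "d' \<in> D" and x: "x \<in> V" for d d' x
  proof (cases "x \<in> orbit v0")
    case True
    have "act d x \<in> orbit v0" using act_orbit_N[OF _ v0 True] d D by blast
    moreover have "act (t \<otimes> d') x \<in> orbit w0"
      using t_act[OF d' x] t_swaps_halves(1)[OF act_orbit_N[OF dN[OF d'] v0 True]] by simp
    ultimately show ?thesis using halves_disjoint by (auto simp: disjoint_iff)
  next
    case False
    then have x': "x \<in> orbit w0" using x halves_cover by blast
    have "act d x \<in> orbit w0" using act_orbit_N[OF _ w0 x'] d D by blast
    moreover have "act (t \<otimes> d') x \<in> orbit v0"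
      using t_act[OF d' x] t_swaps_halves(2)[OF act_orbit_N[OF dN[OF d'] w0 x']] by simp
    ultimately show ?thesis using halves_disjoint by (auto simp: disjoint_iff)
  qed
  then show "D \<inter> (\<otimes>) t ` D = {}" using v0 by blast
  have within: "act c x \<noteq> act d x" if "c \<in> D" "d \<in> D" "c \<noteq> d" "x \<in> V" for c d x
    using clique that unfolding derangement_clique_def by blast
  show "derangement_clique V act (D \<union> (\<otimes>) t ` D)"
    unfolding derangement_clique_def
  proof (intro ballI impI)
    fix c d x assume c: "c \<in> D \<union> (\<otimes>) t ` D" and d: "d \<in> D \<union> (\<otimes>) t ` D" and "c \<noteq> d" and x: "x \<in> V"
    then consider "c \<in> D" "d \<in> D" | d' where "c \<in> D" "d' \<in> D" "d = t \<otimes> d'"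
      | c' where "c' \<in> D" "c = t \<otimes> c'" "d \<in> D"
      | c' d' where "c' \<in> D" "d' \<in> D" "c = t \<otimes> c'" "d = t \<otimes> d'"
      by blast
    then show "act c x \<noteq> act d x"
    proof cases
      case (4 c' d')
      then have "act c' x \<noteq> act d' x" using within \<open>c \<noteq> d\<close> x by blast
      then show ?thesis using 4 t_act x act_inj[OF t] act_closed DG by (metis subsetD)
    qed (use within across \<open>c \<noteq> d\<close> x in metis)+
  qed
qed

lemma sharply_transitive_subset_from_half:
  assumes D: "D \<subseteq> N" and card_D: "card D = card (orbit v0)" and clique: "derangement_clique V act D"
  shows "\<exists>C. sharply_transitive_subset G V act C"
proof -
  have DG: "D \<subseteq> carrier G" using D N.subset by blast
  have finite_D: "finite D"
    using card_D card.infinite finite_orbit[OF v0] orbit_self[OF v0] by fastforce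
  have "card (D \<union> (\<otimes>) t ` D) = card D + card ((\<otimes>) t ` D)"
    using card_Un_disjoint[OF finite_D _ derangement_clique_union_translate(2)[OF D clique]]
      finite_D by simp
  also have "\<dots> = card (orbit v0) + card (orbit w0)"
    using card_image[of "(\<otimes>) t" D] DG t card_D card_orbit_eq[OF v0 w0]
      by (simp add: inj_on_def subset_iff)
  also have "\<dots> = card V"
    using card_Un_disjoint[OF finite_orbit[OF v0] finite_orbit[OF w0] halves_disjoint] halves_cover
      by simp
  finally have "card (D \<union> (\<otimes>) t ` D) = card V" .
  moreover have "D \<union> (\<otimes>) t ` D \<subseteq> carrier G" using DG t by auto
  ultimately show ?thesis
    using derangement_clique_union_translate(1)[OF D clique] unfolding sharply_transitive_subset_def
      by blast
qed

lemma act_conj_t: "n \<in> carrier G \<Longrightarrow> z \<in> V \<Longrightarrow> act (inv t \<otimes> n \<otimes> t) z = act (inv t) (act n (act t z))"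
  using act_conj[OF inv_closed[OF t]] t by simp

lemma conj_t_pointwise_stabilizer:
  "k \<in> pointwise_stabilizer (orbit v0) \<Longrightarrow> inv t \<otimes> k \<otimes> t \<in> pointwise_stabilizer (orbit w0)"
  "k \<in> pointwise_stabilizer (orbit w0) \<Longrightarrow> inv t \<otimes> k \<otimes> t \<in> pointwise_stabilizer (orbit v0)"
  using conj_pointwise_stabilizer[OF inv_closed[OF t], of k] t_swaps_halves halves_cover t by auto

lemma sharply_transitive_subset_if_half_stabilizer_trivial:
  assumes trivial: "\<forall>k\<in>pointwise_stabilizer (orbit v0). \<forall>x\<in>V. act k x = x"
  shows "\<exists>C. sharply_transitive_subset G V act C"
proof -
  have "act n v0 = v0" if n: "n \<in> N" and v: "v \<in> V" and fixed: "act n v = v" for n v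
  proof (cases "v \<in> orbit v0")
    case True
    then show ?thesis
      using fixes_orbit[OF comm n v fixed] orbit_eq[OF v0] orbit_self[OF v0] by metis
  next
    case False
    then have "v \<in> orbit w0" using v halves_cover by blast
    then have "n \<in> pointwise_stabilizer (orbit w0)"
      unfolding pointwise_stabilizer_def
        using fixes_orbit[OF comm n v fixed] orbit_eq[OF w0] n by auto
    then have "act (inv t \<otimes> n \<otimes> t) (act (inv t) v0) = act (inv t) v0"
      using trivial conj_t_pointwise_stabilizer(2) act_closed[OF inv_closed[OF t] v0] by blast
    then have "act (inv t) (act n v0) = act (inv t) v0"
      using act_conj_t[OF N.mem_carrier[OF n] act_closed[OF inv_closed[OF t] v0]]
        act_inv_right[OF t v0] by simp
    then show ?thesis
      using act_inj[OF inv_closed[OF t] act_closed[OF N.mem_carrier[OF n] v0] v0] by blast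
  qed
  then have "derangement_clique V act (transporter v0 ` orbit v0)"
    using derangement_clique_transporters[OF v0] by blast
  moreover have "transporter v0 ` orbit v0 \<subseteq> N" using transporter_mem by blast
  ultimately show ?thesis
    using sharply_transitive_subset_from_half card_image[OF inj_on_transporter] by blast
qed

text \<open>On the first half \<open>k x \<otimes> s x\<close> acts as \<open>s x\<close>, on the second as \<open>k x\<close>; as \<open>N\<close> acts
  commutatively, each is determined on its half by the image of \<open>v0\<close>, resp. \<open>w0\<close>.\<close>
lemma derangement_clique_half_products:
  assumes k: "\<And>x. x \<in> A \<Longrightarrow> k x \<in> pointwise_stabilizer (orbit v0)"
    and s: "\<And>x. x \<in> A \<Longrightarrow> s x \<in> pointwise_stabilizer (orbit w0)"
    and inj_k: "inj_on (\<lambda>x. act (k x) w0) A" and inj_s: "inj_on (\<lambda>x. act (s x) v0) A"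
  shows "inj_on (\<lambda>x. k x \<otimes> s x) A" and "derangement_clique V act ((\<lambda>x. k x \<otimes> s x) ` A)"
proof -
  have kN: "k x \<in> N" and sN: "s x \<in> N" if "x \<in> A" for x
    using k s that unfolding pointwise_stabilizer_def by auto
  have on_v0: "act (k x \<otimes> s x) z = act (s x) z" if x: "x \<in> A" and z: "z \<in> orbit v0" for x z
    using k[OF x] act_orbit_N[OF sN[OF x] v0 z]
      act_mult[OF N.mem_carrier[OF kN[OF x]] N.mem_carrier[OF sN[OF x]]]
      z orbit_subset[OF v0] unfolding pointwise_stabilizer_def by auto
  have on_w0: "act (k x \<otimes> s x) z = act (k x) z" if x: "x \<in> A" and z: "z \<in> orbit w0" for x z
    using s[OF x] act_mult[OF N.mem_carrier[OF kN[OF x]] N.mem_carrier[OF sN[OF x]]] z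
      orbit_subset[OF w0]
    unfolding pointwise_stabilizer_def by auto
  have separates: "act (k x \<otimes> s x) z \<noteq> act (k x' \<otimes> s x') z"
    if x: "x \<in> A" and x': "x' \<in> A" and "x \<noteq> x'" and z: "z \<in> V" for x x' z
  proof
    assume eq: "act (k x \<otimes> s x) z = act (k x' \<otimes> s x') z"
    show False
    proof (cases "z \<in> orbit v0")
      case True
      then have "act (s x) z = act (s x') z" using eq on_v0 x x' by simp
      then have "act (s x) v0 = act (s x') v0"
        using act_eq_on_orbit[OF comm sN[OF x] sN[OF x'] z] orbit_eq[OF v0 True] orbit_self[OF v0]
          by blast
      then show False using inj_s x x' \<open>x \<noteq> x'\<close> unfolding inj_on_def by blast
    next
      case False
      then have z': "z \<in> orbit w0" using z halves_cover by blast
      then have "act (k x) z = act (k x') z" using eq on_w0 x x' by simp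
      then have "act (k x) w0 = act (k x') w0"
        using act_eq_on_orbit[OF comm kN[OF x] kN[OF x'] z] orbit_eq[OF w0 z'] orbit_self[OF w0]
          by blast
      then show False using inj_k x x' \<open>x \<noteq> x'\<close> unfolding inj_on_def by blast
    qed
  qed
  then show "inj_on (\<lambda>x. k x \<otimes> s x) A" using v0 by (intro inj_onI) metis
  show "derangement_clique V act ((\<lambda>x. k x \<otimes> s x) ` A)"
    using separates unfolding derangement_clique_def by blast
qed

text \<open>For \<open>x\<close> in the first half pick \<open>k x\<close> fixing that half with \<open>k x w0 = t x\<close>; its conjugate
  \<open>t\<inverse> (k x) t\<close> fixes the second half and sends \<open>v0\<close> to \<open>x\<close>.\<close>
lemma sharply_transitive_subset_if_half_stabilizer_transitive:
  assumes transitive: "\<forall>y\<in>orbit w0. \<exists>k\<in>pointwise_stabilizer (orbit v0). act k w0 = y"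
  shows "\<exists>C. sharply_transitive_subset G V act C"
proof -
  have "\<forall>x\<in>orbit v0. \<exists>k. k \<in> pointwise_stabilizer (orbit v0) \<and> act k w0 = act t x"
    using transitive t_swaps_halves(1) by blast
  then obtain k
    where k: "\<forall>x\<in>orbit v0. k x \<in> pointwise_stabilizer (orbit v0) \<and> act (k x) w0 = act t x"
    by (auto dest!: bchoice)
  define s where "s x = inv t \<otimes> k x \<otimes> t" for x
  have kG: "k x \<in> carrier G" if "x \<in> orbit v0" for x
    using k that N.subset unfolding pointwise_stabilizer_def by auto
  have s_v0: "act (s x) v0 = x" if x: "x \<in> orbit v0" for x
    using act_conj_t[OF kG[OF x] v0] k x t_v0 act_inv_left[OF t] orbit_subset[OF v0] unfolding s_def
      by auto
  have "inj_on (\<lambda>x. act (k x) w0) (orbit v0)"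
    using k act_inj[OF t] orbit_subset[OF v0] by (intro inj_onI) (metis subsetD)
  moreover have "inj_on (\<lambda>x. act (s x) v0) (orbit v0)" using s_v0 by (intro inj_onI) metis
  ultimately have "inj_on (\<lambda>x. k x \<otimes> s x) (orbit v0)"
    and "derangement_clique V act ((\<lambda>x. k x \<otimes> s x) ` orbit v0)"
    using derangement_clique_half_products[of "orbit v0" k s] k conj_t_pointwise_stabilizer(1)
    unfolding s_def by blast+
  moreover have "(\<lambda>x. k x \<otimes> s x) ` orbit v0 \<subseteq> N"
    using k conj_t_pointwise_stabilizer(1) N.m_closed unfolding s_def pointwise_stabilizer_def
      by auto
  ultimately show ?thesis using sharply_transitive_subset_from_half card_image by blast
qed

lemma conj_preserves_or_swaps_half_stabilizers:
  assumes g: "g \<in> carrier G"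
    and k: "k \<in> pointwise_stabilizer (orbit v0)" and l: "l \<in> pointwise_stabilizer (orbit w0)"
  shows "g \<otimes> k \<otimes> inv g \<in> pointwise_stabilizer (orbit v0) \<and>
      g \<otimes> l \<otimes> inv g \<in> pointwise_stabilizer (orbit w0) \<or>
    g \<otimes> k \<otimes> inv g \<in> pointwise_stabilizer (orbit w0) \<and>
      g \<otimes> l \<otimes> inv g \<in> pointwise_stabilizer (orbit v0)"
proof -
  have halves_V: "orbit v0 \<subseteq> V" "orbit w0 \<subseteq> V" using halves_cover by auto
  from act_preserves_or_swaps_halves[OF inv_closed[OF g]] show ?thesis
  proof (elim disjE conjE)
    assume "act (inv g) ` orbit v0 \<subseteq> orbit v0" "act (inv g) ` orbit w0 \<subseteq> orbit w0"
    then show ?thesis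
      by (intro disjI1 conjI conj_pointwise_stabilizer[OF g k] conj_pointwise_stabilizer[OF g l]
          halves_V) auto
  next
    assume "act (inv g) ` orbit v0 \<subseteq> orbit w0" "act (inv g) ` orbit w0 \<subseteq> orbit v0"
    then show ?thesis
      by (intro disjI2 conjI conj_pointwise_stabilizer[OF g k] conj_pointwise_stabilizer[OF g l]
          halves_V) auto
  qed
qed

lemma stabilizer_product_normal: "stabilizer_product (orbit v0) (orbit w0) \<lhd> G"
proof (rule normal_invI)
  show "subgroup (stabilizer_product (orbit v0) (orbit w0)) G"
    using stabilizer_product_subgroup[OF comm] halves_cover by blast
next
  fix g n assume g: "g \<in> carrier G" and "n \<in> stabilizer_product (orbit v0) (orbit w0)"
  then obtain k l where n: "n \<in> N" and k: "k \<in> pointwise_stabilizer (orbit v0)"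
    and l: "l \<in> pointwise_stabilizer (orbit w0)" and nkl: "\<forall>x\<in>V. act n x = act (k \<otimes> l) x"
    unfolding stabilizer_product_def by blast
  have kG: "k \<in> carrier G" and lG: "l \<in> carrier G"
    using k l N.subset unfolding pointwise_stabilizer_def by auto
  define k' l' where "k' = g \<otimes> k \<otimes> inv g" and "l' = g \<otimes> l \<otimes> inv g"
  have k'N: "k' \<in> N" and l'N: "l' \<in> N"
    using N.inv_op_closed2[OF g] k l unfolding k'_def l'_def pointwise_stabilizer_def by auto
  have conj: "act (g \<otimes> n \<otimes> inv g) x = act k' (act l' x)" if x: "x \<in> V" for x
  proof -
    have "act (g \<otimes> n \<otimes> inv g) x = act g (act k (act l (act (inv g) x)))"
      using act_conj[OF g N.mem_carrier[OF n] x] nkl act_mult[OF kG lG]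
        act_closed[OF inv_closed[OF g] x] by simp
    also have "\<dots> = act k' (act l' x)"
      unfolding k'_def l'_def
        using act_conj[OF g kG] act_conj[OF g lG] act_closed act_inv_left g lG x
      by (simp add: act_closed)
    finally show ?thesis .
  qed
  have prod: "act (g \<otimes> n \<otimes> inv g) x = act (k' \<otimes> l') x"
      "act (g \<otimes> n \<otimes> inv g) x = act (l' \<otimes> k') x" if "x \<in> V" for x
    using conj act_mult comm k'N l'N N.mem_carrier that unfolding acts_commutatively_def by auto
  have "k' \<in> pointwise_stabilizer (orbit v0) \<and> l' \<in> pointwise_stabilizer (orbit w0) \<or>
      k' \<in> pointwise_stabilizer (orbit w0) \<and> l' \<in> pointwise_stabilizer (orbit v0)"
    unfolding k'_def l'_def by (rule conj_preserves_or_swaps_half_stabilizers[OF g k l])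
  then show "g \<otimes> n \<otimes> inv g \<in> stabilizer_product (orbit v0) (orbit w0)"
  proof (elim disjE conjE)
    assume "k' \<in> pointwise_stabilizer (orbit v0)" "l' \<in> pointwise_stabilizer (orbit w0)"
    moreover have "\<forall>x\<in>V. act (g \<otimes> n \<otimes> inv g) x = act (k' \<otimes> l') x" using prod(1) by blast
    ultimately show ?thesis unfolding stabilizer_product_def using N.inv_op_closed2[OF g n] by blast
  next
    assume "k' \<in> pointwise_stabilizer (orbit w0)" "l' \<in> pointwise_stabilizer (orbit v0)"
    moreover have "\<forall>x\<in>V. act (g \<otimes> n \<otimes> inv g) x = act (l' \<otimes> k') x" using prod(2) by blast
    ultimately show ?thesis unfolding stabilizer_product_def using N.inv_op_closed2[OF g n] by blast
  qed
qed

lemma half_stabilizer_subset_stabilizer_product: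
  "pointwise_stabilizer (orbit v0) \<subseteq> stabilizer_product (orbit v0) (orbit w0)"
proof
  fix k assume k: "k \<in> pointwise_stabilizer (orbit v0)"
  then have kN: "k \<in> N" unfolding pointwise_stabilizer_def by blast
  have "\<one> \<in> pointwise_stabilizer (orbit w0)"
    unfolding pointwise_stabilizer_def using N.one_closed act_one orbit_subset[OF w0] by auto
  moreover have "\<forall>x\<in>V. act k x = act (k \<otimes> \<one>) x" using kN by simp
  ultimately show "k \<in> stabilizer_product (orbit v0) (orbit w0)"
    unfolding stabilizer_product_def using kN k by blast
qed

lemma stabilizer_product_act_w0:
  assumes "n \<in> stabilizer_product (orbit v0) (orbit w0)"
  obtains k where "k \<in> pointwise_stabilizer (orbit v0)" and "act n w0 = act k w0"
proof -
  obtain k l where k: "k \<in> pointwise_stabilizer (orbit v0)"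
    and l: "l \<in> pointwise_stabilizer (orbit w0)"
    and "act n w0 = act (k \<otimes> l) w0"
    using assms w0 unfolding stabilizer_product_def by blast
  moreover have "act (k \<otimes> l) w0 = act k w0"
    using k l act_mult N.mem_carrier w0 orbit_self[OF w0] unfolding pointwise_stabilizer_def by auto
  ultimately show thesis using that by simp
qed

text \<open>Here the product \<open>M\<close> of the two half stabilisers has at least three orbits, those of \<open>v0\<close>,
  of \<open>w0\<close> and of a point of the second half out of reach of the first stabiliser.  So \<open>M\<close> is
  intransitive and, the orbits not forming a bipartition, no vertex has two neighbours in one
  \<open>M\<close>-orbit: the normal quotient by \<open>M\<close> applies.\<close>
lemma sharply_transitive_subset_via_stabilizer_product:
  assumes IH: "\<And>(V' :: 'v set) E' act'. card V' < card V \<Longrightarrow> arc_transitive_action G p V' E' act' \<Longrightarrow>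
      \<exists>C. sharply_transitive_subset G V' act' C"
    and nontrivial: "\<exists>k\<in>pointwise_stabilizer (orbit v0). \<exists>x\<in>V. act k x \<noteq> x"
    and not_transitive: "\<exists>y\<in>orbit w0. \<forall>k\<in>pointwise_stabilizer (orbit v0). act k w0 \<noteq> y"
  shows "\<exists>C. sharply_transitive_subset G V act C"
proof -
  define M where "M = stabilizer_product (orbit v0) (orbit w0)"
  interpret M: normal_subgroup_action G p V E act M
    by intro_locales (simp add: normal_subgroup_action_axioms_def M_def stabilizer_product_normal)
  have M_orbit_subset: "M.orbit x \<subseteq> orbit x" for x
    using M.orbit_memE orbit_memI unfolding M_def stabilizer_product_def
      by (metis (no_types, lifting) mem_Collect_eq subsetI)
  have M_nontrivial: "\<exists>n\<in>M. \<exists>x\<in>V. act n x \<noteq> x"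
    using nontrivial half_stabilizer_subset_stabilizer_product unfolding M_def by blast
  obtain y where y: "y \<in> orbit w0" and y_not: "y \<notin> M.orbit w0"
    using not_transitive M.orbit_memE stabilizer_product_act_w0 unfolding M_def by metis
  have yV: "y \<in> V" using y orbit_subset[OF w0] by blast
  have three_orbits: "M.orbit v0 \<noteq> M.orbit w0" "M.orbit v0 \<noteq> M.orbit y" "M.orbit w0 \<noteq> M.orbit y"
    using M_orbit_subset[of v0] M.orbit_self[OF w0] M.orbit_self[OF yV] y y_not orbit_self[OF w0]
      halves_disjoint by blast+
  have M_intransitive: "\<exists>x\<in>V. M.orbit x \<noteq> V" using w0 yV y_not by blast
  have M_distinct: "v = v'" if vw: "E u v" and vw': "E u v'" and v': "v' \<in> M.orbit v" for u v v'
  proof (rule ccontr)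
    assume "v \<noteq> v'"
    have two_orbits: "M.orbit x \<in> {M.orbit u, M.orbit v}" if "x \<in> V" for x
      using that M.orbit_bipartition(1)[OF M_intransitive vw vw' \<open>v \<noteq> v'\<close> v'] M.orbit_eq
        edge_fst[OF vw] edge_snd[OF vw] by blast
    show False using two_orbits[OF v0] two_orbits[OF w0] two_orbits[OF yV] three_orbits by auto
  qed
  show ?thesis
    using IH M_nontrivial M_intransitive M_distinct
      by (rule M.sharply_transitive_subset_via_quotient)
qed

end

section \<open>Sharply transitive subsets of solvable arc-transitive groups\<close>

lemma sharply_transitive_subset_if_commutative:
  assumes IH: "\<And>(V' :: 'v set) E' act'. card V' < card V \<Longrightarrow> arc_transitive_action G p V' E' act' \<Longrightarrow>
      \<exists>C. sharply_transitive_subset G V' act' C"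
    and comm: "acts_commutatively" and nontrivial: "\<exists>n\<in>N. \<exists>x\<in>V. act n x \<noteq> x"
  shows "\<exists>C. sharply_transitive_subset G V act C"
proof (cases "\<forall>x\<in>V. orbit x = V")
  case True
  then show ?thesis using sharply_transitive_subset_if_transitive[OF comm] by blast
next
  case False
  then have intransitive: "\<exists>x\<in>V. orbit x \<noteq> V" by blast
  show ?thesis
  proof (cases "\<forall>v w w'. E v w \<longrightarrow> E v w' \<longrightarrow> w' \<in> orbit w \<longrightarrow> w = w'")
    case True
    then show ?thesis
      using IH nontrivial intransitive by (intro sharply_transitive_subset_via_quotient) blast+
  next
    case False
    then obtain v w w' where vw: "E v w" and vw': "E v w'" and "w' \<in> orbit w" "w \<noteq> w'" by blast
    note bipartition = orbit_bipartition[OF intransitive vw vw' \<open>w \<noteq> w'\<close> \<open>w' \<in> orbit w\<close>]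
    obtain t where t: "t \<in> carrier G" "act t v = w" "act t w = v"
      using arc_transitive[OF vw edge_sym[OF vw]] by blast
    note halves = comm vw bipartition t
    consider "\<forall>k\<in>pointwise_stabilizer (orbit v). \<forall>x\<in>V. act k x = x"
      | "\<forall>y\<in>orbit w. \<exists>k\<in>pointwise_stabilizer (orbit v). act k w = y"
      | "\<exists>k\<in>pointwise_stabilizer (orbit v). \<exists>x\<in>V. act k x \<noteq> x"
        "\<exists>y\<in>orbit w. \<forall>k\<in>pointwise_stabilizer (orbit v). act k w \<noteq> y"
      by blast
    then show ?thesis
    proof cases
      case 1
      show ?thesis using halves 1 by (rule sharply_transitive_subset_if_half_stabilizer_trivial)
    next
      case 2
      show ?thesis using halves 2 by (rule sharply_transitive_subset_if_half_stabilizer_transitive)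
    next
      case 3
      show ?thesis using halves IH 3 by (rule sharply_transitive_subset_via_stabilizer_product)
    qed
  qed
qed

end

theorem sharply_transitive_subset_if_solvable:
  fixes G (structure)
  assumes "solvable G" and "arc_transitive_action G p V E act"
  shows "\<exists>C. sharply_transitive_subset G V act C"
  using assms(2)
proof (induction "card V" arbitrary: V E act rule: less_induct)
  case less
  interpret arc_transitive_action G p V E act by (rule less.prems)
  define K where "K = {g \<in> carrier G. \<forall>v\<in>V. act g v = v}"
  have "\<one> \<in> K" "\<not> carrier G \<subseteq> K" unfolding K_def using act_one action_nontrivial by auto
  then obtain N where N: "N \<lhd> G" "\<not> N \<subseteq> K"
    and commutators: "\<And>a b. a \<in> N \<Longrightarrow> b \<in> N \<Longrightarrow> a \<otimes> b \<otimes> inv a \<otimes> inv b \<in> K"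
    using solvable_normal_subgroup_commutators_in[OF assms(1)] by metis
  interpret normal_subgroup_action G p V E act N
    by intro_locales (simp add: normal_subgroup_action_axioms_def N(1))
  have "act a (act b v) = act b (act a v)" if "a \<in> N" "b \<in> N" "v \<in> V" for a b v
    using act_commute_if_commutator_fixes[OF N.mem_carrier N.mem_carrier] commutators[of a b] that
    unfolding K_def by blast
  then have "acts_commutatively" unfolding acts_commutatively_def by blast
  moreover have "\<exists>n\<in>N. \<exists>x\<in>V. act n x \<noteq> x" using N(2) N.subset unfolding K_def by blast
  ultimately show ?case using less.hyps by (intro sharply_transitive_subset_if_commutative) blast+
qed

section \<open>The clique-coclique bound\<close>

lemma perm_monoid_simps [simp]:
  "carrier (perm_monoid A) = A" "monoid.mult (perm_monoid A) = (\<circ>)" "one (perm_monoid A) = id"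
  unfolding perm_monoid_def by simp_all

context
  fixes V :: "'a set" and G :: "('a \<Rightarrow> 'a) set"
  assumes group: "group (perm_monoid G)" and closed: "\<And>g v. g \<in> G \<Longrightarrow> v \<in> V \<Longrightarrow> g v \<in> V"
begin

interpretation P: group "perm_monoid G" by (rule group)

lemma bij_betw_eval_sharply_transitive:
  assumes finite_V: "finite V" and C: "sharply_transitive_subset (perm_monoid G) V (\<lambda>g. g) C"
    and v: "v \<in> V"
  shows "bij_betw (\<lambda>c. c v) C V"
proof -
  have CG: "C \<subseteq> G" and card_C: "card C = card V" and clique: "derangement_clique V (\<lambda>g. g) C"
    using C unfolding sharply_transitive_subset_def by auto
  have inj: "inj_on (\<lambda>c. c v) C"
  proof (rule inj_onI)
    fix c d assume "c \<in> C" "d \<in> C" "c v = d v"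
    then show "c = d" using clique v unfolding derangement_clique_def by blast
  qed
  have "(\<lambda>c. c v) ` C \<subseteq> V" using closed CG v by blast
  moreover have "card ((\<lambda>c. c v) ` C) = card V" using card_image[OF inj] card_C by simp
  ultimately have "(\<lambda>c. c v) ` C = V" using card_subset_eq[OF finite_V] by blast
  then show ?thesis using inj unfolding bij_betw_def by blast
qed

lemma bij_betw_sharply_transitive_times_stabilizer:
  assumes finite_V: "finite V" and C: "sharply_transitive_subset (perm_monoid G) V (\<lambda>g. g) C"
    and v: "v \<in> V"
  shows "bij_betw (\<lambda>(c, s). c \<circ> s) (C \<times> stabilizer G v) G"
proof (rule bij_betw_imageI)
  have CG: "C \<subseteq> G" using C unfolding sharply_transitive_subset_def by auto
  note eval = bij_betw_eval_sharply_transitive[OF finite_V C v]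
  show "inj_on (\<lambda>(c, s). c \<circ> s) (C \<times> stabilizer G v)"
  proof (rule inj_onI, clarify)
    fix c s d s' assume c: "c \<in> C" "s \<in> stabilizer G v" "d \<in> C" "s' \<in> stabilizer G v"
      and eq: "c \<circ> s = d \<circ> s'"
    have "c v = (c \<circ> s) v" using c(2) unfolding stabilizer_def by simp
    also have "\<dots> = d v" using eq c(4) unfolding stabilizer_def by simp
    finally have "c = d" using eval c unfolding bij_betw_def inj_on_def by blast
    moreover have "s = s'"
      using eq \<open>c = d\<close> P.Units_l_cancel[of c s s'] P.Units_eq c CG unfolding stabilizer_def by auto
    ultimately show "c = d \<and> s = s'" ..
  qed
  show "(\<lambda>(c, s). c \<circ> s) ` (C \<times> stabilizer G v) = G"
  proof
    show "(\<lambda>(c, s). c \<circ> s) ` (C \<times> stabilizer G v) \<subseteq> G"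
      using CG P.m_closed unfolding stabilizer_def by auto
    show "G \<subseteq> (\<lambda>(c, s). c \<circ> s) ` (C \<times> stabilizer G v)"
    proof
      fix g assume g: "g \<in> G"
      have "g v \<in> (\<lambda>c. c v) ` C" using eval closed[OF g v] unfolding bij_betw_def by simp
      then obtain c where c: "c \<in> C" "c v = g v" by (metis imageE)
      define s where "s = inv\<^bsub>perm_monoid G\<^esub> c \<circ> g"
      have cG: "c \<in> G" using c CG by blast
      have "s v = (inv\<^bsub>perm_monoid G\<^esub> c \<circ> c) v" unfolding s_def using c(2) by simp
      also have "\<dots> = v" using P.l_inv[of c] cG by simp
      finally have "s \<in> stabilizer G v" unfolding stabilizer_def s_def
        using P.m_closed P.inv_closed cG g by simp
      moreover have "c \<circ> s = g" unfolding s_def using P.r_inv[of c] cG by (simp add: o_assoc)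
      ultimately show "g \<in> (\<lambda>(c, s). c \<circ> s) ` (C \<times> stabilizer G v)"
        using c(1) by (intro image_eqI[where x = "(c, s)"]) auto
    qed
  qed
qed

lemma card_eq_card_clique_mult_card_stabilizer:
  assumes "finite V" and "sharply_transitive_subset (perm_monoid G) V (\<lambda>g. g) C" and "v \<in> V"
  shows "card G = card C * card (stabilizer G v)"
  using bij_betw_same_card[OF bij_betw_sharply_transitive_times_stabilizer[OF assms]]
    card_cartesian_product
  by metis

lemma card_intersecting_mult_card_clique_le:
  assumes finite_G: "finite G" and CG: "C \<subseteq> G" and clique: "derangement_clique V (\<lambda>g. g) C"
    and FG: "F \<subseteq> G" and intersecting: "intersecting V F"
  shows "card F * card C \<le> card G"
proof -
  have "inj_on (\<lambda>(f, c). inv\<^bsub>perm_monoid G\<^esub> c \<circ> f) (F \<times> C)"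
  proof (rule inj_onI, clarify)
    fix f c f' c' assume f: "f \<in> F" "f' \<in> F" and c: "c \<in> C" "c' \<in> C"
      and eq: "inv\<^bsub>perm_monoid G\<^esub> c \<circ> f = inv\<^bsub>perm_monoid G\<^esub> c' \<circ> f'"
    define g where "g = inv\<^bsub>perm_monoid G\<^esub> c \<circ> f"
    have "g \<in> G" unfolding g_def using P.m_closed[OF P.inv_closed, of c f] f c FG CG by auto
    have g': "g = inv\<^bsub>perm_monoid G\<^esub> c' \<circ> f'" unfolding g_def by (rule eq)
    have "f = c \<circ> g" unfolding g_def using P.r_inv c CG by (auto simp: o_assoc)
    moreover have "f' = c' \<circ> g" unfolding g' using P.r_inv c CG by (auto simp: o_assoc)
    ultimately have f_eq: "f = c \<circ> g" "f' = c' \<circ> g" .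
    obtain v where "v \<in> V" "f v = f' v" using intersecting f unfolding intersecting_def by blast
    then have "c = c'"
      using f_eq closed[OF \<open>g \<in> G\<close>] clique c unfolding derangement_clique_def by auto
    then show "f = f' \<and> c = c'" using f_eq by simp
  qed
  moreover have "(\<lambda>(f, c). inv\<^bsub>perm_monoid G\<^esub> c \<circ> f) ` (F \<times> C) \<subseteq> G"
    using P.m_closed[OF P.inv_closed] FG CG by auto
  ultimately show ?thesis using card_inj_on_le[OF _ _ finite_G] card_cartesian_product by metis
qed

lemma EKR_if_sharply_transitive_subset:
  assumes finite_G: "finite G" and finite_V: "finite V" and "V \<noteq> {}"
    and C: "sharply_transitive_subset (perm_monoid G) V (\<lambda>g. g) C"
  shows "EKR V G"
proof -
  obtain v0 where v0: "v0 \<in> V" using \<open>V \<noteq> {}\<close> by blast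
  define s where "s = card (stabilizer G v0)"
  have CG: "C \<subseteq> G" and clique: "derangement_clique V (\<lambda>g. g) C" and card_C: "card C = card V"
    using C unfolding sharply_transitive_subset_def by auto
  have "0 < card V" using finite_V v0 card_gt_0_iff by blast
  have card_G: "card G = card C * s" unfolding s_def
    by (rule card_eq_card_clique_mult_card_stabilizer[OF finite_V C v0])
  have stabilizers: "{card (stabilizer G v) | v. v \<in> V} = {s}"
    using card_eq_card_clique_mult_card_stabilizer[OF finite_V C] card_G card_C \<open>0 < card V\<close> v0
      by auto
  have "card F \<le> s" if "F \<subseteq> G" "intersecting V F" for F
  proof -
    have "card F * card V \<le> s * card V"
      using card_intersecting_mult_card_clique_le[OF finite_G CG clique that] card_G card_C
      by (simp add: mult.commute)
    then show ?thesis using \<open>0 < card V\<close> by simp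
  qed
  moreover have "stabilizer G v0 \<subseteq> G \<and> intersecting V (stabilizer G v0)"
    using v0 unfolding stabilizer_def intersecting_def by (auto intro!: bexI[where x = v0])
  moreover have "finite {card F | F. F \<subseteq> G \<and> intersecting V F}"
  proof (rule finite_subset)
    show "{card F | F. F \<subseteq> G \<and> intersecting V F} \<subseteq> card ` Pow G" by blast
  qed (use finite_G in simp)
  ultimately have "Max {card F | F. F \<subseteq> G \<and> intersecting V F} = s"
    unfolding s_def by (intro Max_eqI) auto
  then show ?thesis unfolding EKR_def stabilizers by simp
qed

end

section \<open>Groups of graph automorphisms\<close>

lemma group_perm_monoid_graph_aut: "group (perm_monoid {f. graph_aut V E f})"
proof (rule groupI)
  fix f assume "f \<in> carrier (perm_monoid {f. graph_aut V E f})"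
  then have f: "f permutes V" "\<And>u v. E u v \<longleftrightarrow> E (f u) (f v)" by (auto simp: graph_aut_def)
  have "graph_aut V E (inv_into UNIV f)"
    unfolding graph_aut_def using permutes_inv[OF f(1)] f(2) permutes_inverses(1)[OF f(1)] by metis
  then show "\<exists>g\<in>carrier (perm_monoid {f. graph_aut V E f}).
      g \<otimes>\<^bsub>perm_monoid {f. graph_aut V E f}\<^esub> f = \<one>\<^bsub>perm_monoid {f. graph_aut V E f}\<^esub>"
    using permutes_inv_o(2)[OF f(1)] by auto
qed (auto simp: graph_aut_def permutes_compose o_assoc)

lemma group_perm_monoid_subgroup:
  assumes "subgroup G (perm_monoid A)" and "group (perm_monoid A)" shows "group (perm_monoid G)"
proof -
  have "(perm_monoid A)\<lparr>carrier := G\<rparr> = perm_monoid G" unfolding perm_monoid_def by simp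
  then show ?thesis using subgroup.subgroup_is_group[OF assms] by metis
qed

lemma arc_transitive_action_perm_group:
  assumes "prime p" and "simple_graph V E" and "connected_graph V E"
    and "regular_graph V E p"
    and aut: "G \<subseteq> {f. graph_aut V E f}" and "group (perm_monoid G)" and arc: "arc_transitive_on E G"
  shows "arc_transitive_action (perm_monoid G) p V E (\<lambda>g. g)"
proof (intro arc_transitive_action.intro arc_transitive_action_axioms.intro)
  show "g v \<in> V" if "g \<in> carrier (perm_monoid G)" "v \<in> V" for g v
    using that aut permutes_in_image unfolding graph_aut_def by fastforce
  show "E (g u) (g v)" if "g \<in> carrier (perm_monoid G)" "E u v" for g u v
    using that aut unfolding graph_aut_def by auto
  show "\<exists>g\<in>carrier (perm_monoid G). g u = u' \<and> g v = v'" if "E u v" "E u' v'" for u v u' v'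
    using arc that unfolding arc_transitive_on_def arcs_def by fastforce
qed (use assms in \<open>auto simp: simple_graph_def connected_graph_def regular_graph_def\<close>)

theorem proposition4p1:
  fixes V :: "'a set" and E :: "'a \<Rightarrow> 'a \<Rightarrow> bool" and G :: "('a \<Rightarrow> 'a) set" and p :: nat
  assumes "prime p"
    and "simple_graph V E"
    and "connected_graph V E"
    and "regular_graph V E p"
    and "arc_transitive_on E {f. graph_aut V E f}"
    and "subgroup G (perm_monoid {f. graph_aut V E f})"
    and "solvable (perm_monoid G)"
    and "arc_transitive_on E G"
  shows "EKR V G"
proof -
  have aut: "G \<subseteq> {f. graph_aut V E f}" using subgroup.subset[OF assms(6)] by simp
  have group: "group (perm_monoid G)"
    by (rule group_perm_monoid_subgroup[OF assms(6) group_perm_monoid_graph_aut])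
  have action: "arc_transitive_action (perm_monoid G) p V E (\<lambda>g. g)"
    by (rule arc_transitive_action_perm_group[OF assms(1-4) aut group assms(8)])
  then interpret arc_transitive_action "perm_monoid G" p V E "\<lambda>g. g" .
  obtain C where "sharply_transitive_subset (perm_monoid G) V (\<lambda>g. g) C"
    using sharply_transitive_subset_if_solvable[OF assms(7) action] by blast
  moreover have "finite G"
    using aut finite_subset[OF _ finite_permutations[OF finite_V]] unfolding graph_aut_def by blast
  ultimately show ?thesis
    using EKR_if_sharply_transitive_subset[OF group] act_closed finite_V V_nonempty by simp
qed

end
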